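(* Let $L\in\mathbb{R}^{n\times n}$ be a real symmetric positive semidefinite matrix, let $U_k\in\mathbb{R}^{n\times k}$ have orthonormal columns that are eigenvectors of $L$, and let $\mathrm{span}(U_k)$ denote its column space. Let $\beta>0$, let $\mathrm{E},\mathrm{E}_{\text{model}}\in\mathbb{R}$, and set $a=\mathrm{E}-\mathrm{E}_{\text{model}}$. For $\phi,\rho\in\mathbb{R}^n$ define \[ \mathcal{L}(\phi,\rho)=\beta\,\|L\phi-\rho\|_2^2+\Big(a+\tfrac12\,\phi^\top\rho\Big)^2 . \] Fix $\phi\in\mathrm{span}(U_k)$. Then the unique minimizer of $\rho\mapsto\mathcal{L}(\phi,\rho)$ over $\mathrm{span}(U_k)$ is \[ \rho^\star(\phi)=L\phi-t^\star(\phi)\,\phi,\qquad t^\star(\phi)=\frac{a+\frac12\,\phi^\top L\phi}{2\beta+\frac12\,\|\phi\|_2^2}. \]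
   Context: $\mathcal{L}$ is the (squared, $L^2$) surrogate training objective combining a Poisson-equation residual $\|L\phi-\rho\|^2$ weighted by $\beta$ with a squared energy term involving the electrostatic energy $\frac12\phi^\top\rho$; $\phi$ plays the role of a potential and $\rho$ of charges on the nodes of a graph with Laplacian $L$. *)

theory Defs
  imports "HOL-Analysis.Analysis"
begin

definition surrogate_loss ::
  "real \<Rightarrow> real \<Rightarrow> real^'n^'n \<Rightarrow> real^'n \<Rightarrow> real^'n \<Rightarrow> real" where
  "surrogate_loss \<beta> a L \<phi> \<rho> = \<beta> * (norm (L *v \<phi> - \<rho>))\<^sup>2 + (a + (1/2) * (\<phi> \<bullet> \<rho>))\<^sup>2"

end

theory Submission
  imports Defs
begin

text \<open>For fixed \<open>\<phi>\<close> the loss is a quadratic in \<open>\<rho>\<close> with positive definite Hessian, so its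
  unique critical point \<open>L\<phi> - t\<phi>\<close> is its unique global minimiser on all of \<open>\<real>\<^sup>n\<close>. That point lies
  in the span of the eigenvectors because this span is invariant under \<open>L\<close>.\<close>

lemma span_invariant_of_eigenvectors:
  assumes "linear f"
    and "\<And>v. v \<in> S \<Longrightarrow> \<exists>c. f v = c *\<^sub>R v"
    and "x \<in> span S"
  shows "f x \<in> span S"
proof -
  have "f ` S \<subseteq> span S"
    using assms(2) by (metis image_subsetI span_base span_scale)
  then have "span (f ` S) \<subseteq> span S"
    using span_minimal subspace_span by blast
  then show ?thesis
    using span_linear_image[OF assms(1)] assms(3) by blast
qed

text \<open>The hypothesis says that the gradient of \<open>surrogate_loss \<beta> a L \<phi>\<close> vanishes at \<open>\<rho>\<close>.\<close>

lemma surrogate_loss_expand_at_critical: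
  fixes L :: "real^'n^'n" and \<phi> \<rho> d :: "real^'n"
  assumes crit: "(2 * \<beta>) *\<^sub>R (\<rho> - L *v \<phi>) + (a + (1/2) * (\<phi> \<bullet> \<rho>)) *\<^sub>R \<phi> = 0"
  shows "surrogate_loss \<beta> a L \<phi> (\<rho> + d)
       = surrogate_loss \<beta> a L \<phi> \<rho> + \<beta> * (norm d)\<^sup>2 + ((1/2) * (\<phi> \<bullet> d))\<^sup>2"
proof -
  define c where "c = a + (1/2) * (\<phi> \<bullet> \<rho>)"
  define x where "x = (\<rho> - L *v \<phi>) \<bullet> d"
  have linear_term: "2 * \<beta> * x + c * (\<phi> \<bullet> d) = 0"
    using arg_cong[OF crit, of "\<lambda>v. v \<bullet> d"] unfolding c_def x_def
    by (simp add: inner_add_left)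
  have "(norm (L *v \<phi> - (\<rho> + d)))\<^sup>2 = (norm (L *v \<phi> - \<rho>))\<^sup>2 + 2 * x + (norm d)\<^sup>2"
    unfolding power2_norm_eq_inner x_def
    by (simp add: inner_diff_left inner_diff_right inner_add_left inner_add_right
        inner_commute algebra_simps)
  moreover have "a + (1/2) * (\<phi> \<bullet> (\<rho> + d)) = c + (1/2) * (\<phi> \<bullet> d)"
    unfolding c_def by (simp add: inner_add_right algebra_simps)
  ultimately have "surrogate_loss \<beta> a L \<phi> (\<rho> + d)
      = \<beta> * ((norm (L *v \<phi> - \<rho>))\<^sup>2 + 2 * x + (norm d)\<^sup>2) + (c + (1/2) * (\<phi> \<bullet> d))\<^sup>2"
    unfolding surrogate_loss_def by simp
  also have "\<dots> = surrogate_loss \<beta> a L \<phi> \<rho> + \<beta> * (norm d)\<^sup>2 + ((1/2) * (\<phi> \<bullet> d))\<^sup>2"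
    unfolding surrogate_loss_def c_def[symmetric] using linear_term
    by (simp add: power2_eq_square algebra_simps)
  finally show ?thesis .
qed

lemma surrogate_loss_strict_min_at_critical:
  fixes L :: "real^'n^'n" and \<phi> \<rho>\<^sub>s \<rho> :: "real^'n"
  assumes "\<beta> > 0"
    and "(2 * \<beta>) *\<^sub>R (\<rho>\<^sub>s - L *v \<phi>) + (a + (1/2) * (\<phi> \<bullet> \<rho>\<^sub>s)) *\<^sub>R \<phi> = 0"
    and "\<rho> \<noteq> \<rho>\<^sub>s"
  shows "surrogate_loss \<beta> a L \<phi> \<rho>\<^sub>s < surrogate_loss \<beta> a L \<phi> \<rho>"
proof -
  have "surrogate_loss \<beta> a L \<phi> \<rho>
      = surrogate_loss \<beta> a L \<phi> \<rho>\<^sub>s + \<beta> * (norm (\<rho> - \<rho>\<^sub>s))\<^sup>2 + ((1/2) * (\<phi> \<bullet> (\<rho> - \<rho>\<^sub>s)))\<^sup>2"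
    using surrogate_loss_expand_at_critical[OF assms(2), of "\<rho> - \<rho>\<^sub>s"] by simp
  moreover have "\<beta> * (norm (\<rho> - \<rho>\<^sub>s))\<^sup>2 > 0"
    using assms(1,3) by simp
  ultimately show ?thesis
    using zero_le_power2[of "(1/2) * (\<phi> \<bullet> (\<rho> - \<rho>\<^sub>s))"] by linarith
qed

lemma surrogate_loss_critical_point:
  fixes L :: "real^'n^'n" and \<phi> :: "real^'n"
  assumes "2 * \<beta> + (1/2) * (norm \<phi>)\<^sup>2 \<noteq> 0"
    and "t = (a + (1/2) * (\<phi> \<bullet> (L *v \<phi>))) / (2 * \<beta> + (1/2) * (norm \<phi>)\<^sup>2)"
  shows "(2 * \<beta>) *\<^sub>R ((L *v \<phi> - t *\<^sub>R \<phi>) - L *v \<phi>)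
       + (a + (1/2) * (\<phi> \<bullet> (L *v \<phi> - t *\<^sub>R \<phi>))) *\<^sub>R \<phi> = 0"
proof -
  have "t * (2 * \<beta> + (1/2) * (norm \<phi>)\<^sup>2) = a + (1/2) * (\<phi> \<bullet> (L *v \<phi>))"
    using assms by simp
  then have "a + (1/2) * (\<phi> \<bullet> (L *v \<phi> - t *\<^sub>R \<phi>)) = 2 * \<beta> * t"
    by (simp add: inner_diff_right power2_norm_eq_inner algebra_simps)
  then show ?thesis
    by simp
qed

theorem theorem1:
  fixes L :: "real^'n^'n" and U :: "real^'k^'n"
    and \<beta> E E_model :: real and \<phi> :: "real^'n"
  assumes sym: "transpose L = L"
    and psd: "\<forall>x. 0 \<le> x \<bullet> (L *v x)"
    and orthonormal: "transpose U ** U = mat 1"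
    and eigen: "\<forall>j. \<exists>c. L *v column j U = c *\<^sub>R column j U"
    and beta_pos: "\<beta> > 0"
    and phi_span: "\<phi> \<in> span (columns U)"
  defines "a \<equiv> E - E_model"
  defines "t \<equiv> (a + (1/2) * (\<phi> \<bullet> (L *v \<phi>))) / (2 * \<beta> + (1/2) * (norm \<phi>)\<^sup>2)"
  defines "\<rho>\<^sub>s \<equiv> L *v \<phi> - t *\<^sub>R \<phi>"
  shows "\<rho>\<^sub>s \<in> span (columns U)
    \<and> (\<forall>\<rho> \<in> span (columns U). surrogate_loss \<beta> a L \<phi> \<rho>\<^sub>s \<le> surrogate_loss \<beta> a L \<phi> \<rho>)
    \<and> (\<forall>\<rho> \<in> span (columns U).
         (\<forall>\<rho>' \<in> span (columns U). surrogate_loss \<beta> a L \<phi> \<rho> \<le> surrogate_loss \<beta> a L \<phi> \<rho>')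
         \<longrightarrow> \<rho> = \<rho>\<^sub>s)"
proof -
  have "L *v \<phi> \<in> span (columns U)"
    using span_invariant_of_eigenvectors[OF matrix_vector_mul_linear _ phi_span] eigen
    unfolding columns_def by blast
  then have in_span: "\<rho>\<^sub>s \<in> span (columns U)"
    unfolding \<rho>\<^sub>s_def using phi_span by (simp add: span_diff span_scale)
  have "2 * \<beta> + (1/2) * (norm \<phi>)\<^sup>2 \<noteq> 0"
    using beta_pos zero_le_power2[of "norm \<phi>"] by linarith
  then have "(2 * \<beta>) *\<^sub>R (\<rho>\<^sub>s - L *v \<phi>) + (a + (1/2) * (\<phi> \<bullet> \<rho>\<^sub>s)) *\<^sub>R \<phi> = 0"
    unfolding \<rho>\<^sub>s_def using surrogate_loss_critical_point t_def by blast
  then have "\<And>\<rho>. \<rho> \<noteq> \<rho>\<^sub>s \<Longrightarrow> surrogate_loss \<beta> a L \<phi> \<rho>\<^sub>s < surrogate_loss \<beta> a L \<phi> \<rho>"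
    using surrogate_loss_strict_min_at_critical beta_pos by blast
  then show ?thesis
    using in_span by (metis not_le order.refl order.strict_implies_order)
qed

end
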